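(* For any $4$-regular graph $G$ on $n$ vertices, where $n=20$ or $n=21$, we have $\mathcal{E}(G)<2(n-1)$.
   Context: All graphs are finite, simple and undirected. The energy $\mathcal{E}(G)$ of a graph $G$ is the sum of the absolute values of the eigenvalues of its adjacency matrix. *)

theory Defs
  imports "Jordan_Normal_Form.Char_Poly" "HOL-Computational_Algebra.Polynomial"
begin

definition simple_graph :: "nat \<Rightarrow> (nat \<Rightarrow> nat \<Rightarrow> bool) \<Rightarrow> bool" where
  "simple_graph n E \<longleftrightarrow> (\<forall>i<n. \<forall>j<n. E i j \<longleftrightarrow> E j i) \<and> (\<forall>i<n. \<not> E i i)"

definition degree :: "nat \<Rightarrow> (nat \<Rightarrow> nat \<Rightarrow> bool) \<Rightarrow> nat \<Rightarrow> nat" where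
  "degree n E i = card {j. j < n \<and> E i j}"

definition regular_graph :: "nat \<Rightarrow> nat \<Rightarrow> (nat \<Rightarrow> nat \<Rightarrow> bool) \<Rightarrow> bool" where
  "regular_graph k n E \<longleftrightarrow> simple_graph n E \<and> (\<forall>i<n. degree n E i = k)"

definition adjacency_matrix :: "nat \<Rightarrow> (nat \<Rightarrow> nat \<Rightarrow> bool) \<Rightarrow> real mat" where
  "adjacency_matrix n E = mat n n (\<lambda>(i, j). if E i j then 1 else 0)"

text \<open>Eigenvalues (with algebraic multiplicity) = roots of the characteristic polynomial,
  taken over the complex numbers (they are real since the matrix is symmetric).\<close>
definition graph_eigenvalues :: "nat \<Rightarrow> (nat \<Rightarrow> nat \<Rightarrow> bool) \<Rightarrow> complex multiset" where
  "graph_eigenvalues n E = proots (char_poly (map_mat complex_of_real (adjacency_matrix n E)))"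

definition graph_energy :: "nat \<Rightarrow> (nat \<Rightarrow> nat \<Rightarrow> bool) \<Rightarrow> real" where
  "graph_energy n E = sum_mset (image_mset cmod (graph_eigenvalues n E))"

end

theory Submission
  imports Defs "Jordan_Normal_Form.Schur_Decomposition"
begin

(* The eigenvalues of a 4-regular graph on n vertices are real, lie in [-4, 4] and include 4.
   Counting closed walks gives the moments: the sum of their squares is tr A^2 = 4n, and the sum
   of their fourth powers is tr A^4 >= 28n, because the entries of A^2 are natural numbers with
   row sums 16 and diagonal 4.  For s > 0 and small e >= 0 the quartic
   |x| <= (s^2 + x^2) / (2 s) - e (x^2 - s^2)^2 holds on an interval [-b, b], so these two moments
   bound the energy from above.  After removing the eigenvalue 4, and one further eigenvalue of
   modulus above 3 if there is one, suitable choices of s and e push the bound below 2 (n - 1)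
   for every n >= 20. *)

section \<open>Traces and eigenvalues\<close>

definition trace :: "'a::comm_monoid_add mat \<Rightarrow> 'a" where
  "trace A = (\<Sum>i<dim_row A. A $$ (i, i))"

lemma index_mult_mat_sum:
  assumes "A \<in> carrier_mat n m" "B \<in> carrier_mat m l" "i < n" "j < l"
  shows "(A * B) $$ (i, j) = (\<Sum>k<m. A $$ (i, k) * B $$ (k, j))"
  using assms by (auto simp: scalar_prod_def atLeast0LessThan intro!: sum.cong)

declare index_mult_mat(1) [simp del]

lemma index_mult_mat_vec_sum:
  assumes "A \<in> carrier_mat n m" "v \<in> carrier_vec m" "i < n"
  shows "(A *\<^sub>v v) $ i = (\<Sum>j<m. A $$ (i, j) * v $ j)"
  using assms by (auto simp: scalar_prod_def atLeast0LessThan intro!: sum.cong)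

lemma trace_mult_self:
  assumes "A \<in> carrier_mat n n"
  shows "trace (A * A) = (\<Sum>i<n. \<Sum>k<n. A $$ (i, k) * A $$ (k, i))"
  using assms unfolding trace_def
  by (auto simp: index_mult_mat_sum intro!: sum.cong)

lemma trace_mult_comm:
  fixes A B :: "'a::comm_semiring_0 mat"
  assumes "A \<in> carrier_mat n m" "B \<in> carrier_mat m n"
  shows "trace (A * B) = trace (B * A)"
proof -
  have "trace (A * B) = (\<Sum>i<n. \<Sum>k<m. A $$ (i, k) * B $$ (k, i))"
    using assms unfolding trace_def
    by (auto simp: index_mult_mat_sum intro!: sum.cong)
  also have "\<dots> = (\<Sum>k<m. \<Sum>i<n. B $$ (k, i) * A $$ (i, k))"
    by (subst sum.swap) (simp add: mult.commute)
  also have "\<dots> = trace (B * A)"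
    using assms unfolding trace_def
    by (auto simp: index_mult_mat_sum intro!: sum.cong)
  finally show ?thesis .
qed

lemma trace_map_mat_of_real:
  assumes "A \<in> carrier_mat n n"
  shows "trace (map_mat of_real A) = (of_real (trace A) :: 'a::real_algebra_1)"
  using assms by (simp add: trace_def of_real_sum)

lemma upper_triangular_mult:
  fixes A B :: "'a::semiring_0 mat"
  assumes A: "A \<in> carrier_mat n n" and B: "B \<in> carrier_mat n n"
    and "upper_triangular A" "upper_triangular B"
  shows "upper_triangular (A * B)"
    and "i < n \<Longrightarrow> (A * B) $$ (i, i) = A $$ (i, i) * B $$ (i, i)"
proof -
  have vanish: "A $$ (i, k) * B $$ (k, j) = 0" if "j < i \<or> (j = i \<and> k \<noteq> i)" "i < n" "k < n" for i j k
    using that assms upper_triangularD[of A k i] upper_triangularD[of B j k]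
    by (cases "k < i") auto
  show "upper_triangular (A * B)"
    using A B vanish by (intro upper_triangularI) (auto simp: index_mult_mat_sum intro!: sum.neutral)
  show "(A * B) $$ (i, i) = A $$ (i, i) * B $$ (i, i)" if "i < n"
    using A B vanish that by (simp add: index_mult_mat_sum sum.remove[of "{..<n}" i])
qed

lemma upper_triangular_pow:
  fixes A :: "'a::semiring_1 mat"
  assumes A: "A \<in> carrier_mat n n" and "upper_triangular A"
  shows "upper_triangular (A ^\<^sub>m k)"
    and "i < n \<Longrightarrow> (A ^\<^sub>m k) $$ (i, i) = A $$ (i, i) ^ k"
proof -
  have "upper_triangular (A ^\<^sub>m k) \<and> (\<forall>i<n. (A ^\<^sub>m k) $$ (i, i) = A $$ (i, i) ^ k)"
  proof (induction k)
    case (Suc k)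
    then show ?case
      using upper_triangular_mult[of "A ^\<^sub>m k" n A] assms by (simp add: power_commutes)
  qed (use A in \<open>auto simp: upper_triangular_def\<close>)
  then show "upper_triangular (A ^\<^sub>m k)" "i < n \<Longrightarrow> (A ^\<^sub>m k) $$ (i, i) = A $$ (i, i) ^ k"
    by auto
qed

lemma proots_char_poly_factorized:
  fixes A :: "complex mat"
  assumes "A \<in> carrier_mat n n"
  obtains as where "char_poly A = (\<Prod>a\<leftarrow>as. [:- a, 1:])" and "proots (char_poly A) = mset as"
proof -
  obtain as where as: "char_poly A = (\<Prod>a\<leftarrow>as. [:- a, 1:])"
    using char_poly_factorized[OF assms] by blast
  have "proots (\<Prod>a\<leftarrow>as. [:- a, 1:]) = mset as"
    using proots_prod_list[of "map (\<lambda>a. [:- a, 1:]) as"]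
    by (simp add: o_def image_iff)
  with as that show thesis by simp
qed

lemma size_proots_char_poly:
  fixes A :: "complex mat"
  assumes "A \<in> carrier_mat n n"
  shows "size (proots (char_poly A)) = n"
proof -
  obtain as where "char_poly A = (\<Prod>a\<leftarrow>as. [:- a, 1:])" "proots (char_poly A) = mset as"
    using proots_char_poly_factorized[OF assms] .
  moreover have "Polynomial.degree (char_poly A) = n"
    using degree_monic_char_poly[OF assms] by simp
  ultimately show ?thesis
    by (simp add: degree_linear_factors)
qed

lemma mem_proots_char_poly_iff:
  fixes A :: "'a::field mat"
  assumes "A \<in> carrier_mat n n"
  shows "a \<in># proots (char_poly A) \<longleftrightarrow> eigenvalue A a"
proof -
  have "char_poly A \<noteq> 0"
    using degree_monic_char_poly[OF assms] by auto
  then show ?thesis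
    by (simp add: eigenvalue_root_char_poly[OF assms])
qed

lemma sum_proots_char_poly_power:
  fixes A :: "complex mat"
  assumes A: "A \<in> carrier_mat n n"
  shows "(\<Sum>a\<in>#proots (char_poly A). a ^ k) = trace (A ^\<^sub>m k)"
proof -
  obtain as where cp: "char_poly A = (\<Prod>a\<leftarrow>as. [:- a, 1:])" and roots: "proots (char_poly A) = mset as"
    using proots_char_poly_factorized[OF A] .
  obtain B P Q where "schur_decomposition A as = (B, P, Q)"
    by (cases "schur_decomposition A as") auto
  from schur_decomposition[OF A cp this] have sim: "similar_mat_wit A B P Q"
    and ut: "upper_triangular B" and diag: "diag_mat B = as" by auto
  note dims = similar_mat_witD2[OF A sim]
  have Bk: "B ^\<^sub>m k \<in> carrier_mat n n" using dims by simp
  have "trace (A ^\<^sub>m k) = trace (P * (B ^\<^sub>m k * Q))"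
    using similar_mat_wit_pow_id[OF sim, of k] dims Bk by (simp add: assoc_mult_mat[of P n n _ n Q n])
  also have "\<dots> = trace ((B ^\<^sub>m k * Q) * P)"
    using dims Bk by (intro trace_mult_comm[of _ n n]) auto
  also have "(B ^\<^sub>m k * Q) * P = B ^\<^sub>m k"
    using dims Bk by (simp add: assoc_mult_mat[of _ n n Q n P n])
  also have "trace (B ^\<^sub>m k) = (\<Sum>i<n. B $$ (i, i) ^ k)"
    using upper_triangular_pow(2)[OF _ ut] dims by (simp add: trace_def)
  also have "\<dots> = (\<Sum>a\<leftarrow>as. a ^ k)"
    using dims diag by (auto simp: diag_mat_def sum_list_sum_nth atLeast0LessThan intro: sum.cong)
  finally show ?thesis
    by (simp add: roots sum_mset_sum_list flip: mset_map)
qed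

lemma eigenvectorE:
  assumes "eigenvector A v e" "A \<in> carrier_mat n n"
  obtains i where "v \<in> carrier_vec n" "i < n" "v $ i \<noteq> 0"
    and "\<And>i. i < n \<Longrightarrow> (\<Sum>j<n. A $$ (i, j) * v $ j) = e * v $ i"
proof -
  have v: "v \<in> carrier_vec n" "v \<noteq> 0\<^sub>v n" and Av: "A *\<^sub>v v = e \<cdot>\<^sub>v v"
    using assms unfolding eigenvector_def by auto
  then obtain i where "i < n" "v $ i \<noteq> 0"
    by (metis carrier_vecD eq_vecI index_zero_vec)
  moreover have "(\<Sum>j<n. A $$ (i, j) * v $ j) = e * v $ i" if "i < n" for i
    using arg_cong[OF Av, of "\<lambda>w. w $ i"] index_mult_mat_vec_sum[OF assms(2) v(1) that] v(1) that
    by simp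
  ultimately show thesis using that v by blast
qed

lemma eigenvalue_of_real_symmetric_is_real:
  fixes A :: "real mat"
  assumes A: "A \<in> carrier_mat n n" and sym: "\<And>i j. i < n \<Longrightarrow> j < n \<Longrightarrow> A $$ (j, i) = A $$ (i, j)"
    and "eigenvalue (map_mat complex_of_real A) e"
  shows "e \<in> \<real>"
proof -
  obtain v where "eigenvector (map_mat complex_of_real A) v e"
    using assms(3) unfolding eigenvalue_def by blast
  then obtain i0 where v: "v \<in> carrier_vec n" "i0 < n" "v $ i0 \<noteq> 0"
    and Av: "\<And>i. i < n \<Longrightarrow> (\<Sum>j<n. of_real (A $$ (i, j)) * v $ j) = e * v $ i"
    using A by (elim eigenvectorE) auto
  \<comment> \<open>The Hermitian form of v is real by symmetry and equals e times the positive norm of v.\<close>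
  define Q where "Q = (\<Sum>i<n. \<Sum>j<n. cnj (v $ i) * of_real (A $$ (i, j)) * v $ j)"
  define N where "N = (\<Sum>i<n. cmod (v $ i) ^ 2)"
  have "Q = (\<Sum>i<n. cnj (v $ i) * (\<Sum>j<n. of_real (A $$ (i, j)) * v $ j))"
    by (simp add: Q_def sum_distrib_left mult.assoc)
  also have "\<dots> = e * of_real N"
    using Av by (simp add: N_def of_real_sum sum_distrib_left ac_simps flip: complex_norm_square)
  finally have "Q = e * of_real N" .
  moreover have "cnj Q = Q"
  proof -
    have "cnj Q = (\<Sum>j<n. \<Sum>i<n. cnj (v $ j) * of_real (A $$ (j, i)) * v $ i)"
      unfolding Q_def by (subst sum.swap) (simp add: sym ac_simps)
    then show ?thesis unfolding Q_def .
  qed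
  moreover have "0 < N"
    unfolding N_def using v by (intro sum_pos2[of _ i0]) auto
  ultimately have "cnj e * of_real N = e * of_real N"
    by (metis complex_cnj_mult complex_cnj_complex_of_real)
  with \<open>0 < N\<close> have "cnj e = e"
    by simp
  then show ?thesis
    by (simp add: Reals_cnj_iff)
qed

lemma eigenvalue_norm_le_row_sum:
  fixes A :: "'a::real_normed_field mat"
  assumes A: "A \<in> carrier_mat n n" and "eigenvalue A e"
    and rows: "\<And>i. i < n \<Longrightarrow> (\<Sum>j<n. norm (A $$ (i, j))) \<le> d"
  shows "norm e \<le> d"
proof -
  obtain v where "eigenvector A v e"
    using assms(2) unfolding eigenvalue_def by blast
  then obtain i1 where i1: "i1 < n" "v $ i1 \<noteq> 0"
    and Av: "\<And>i. i < n \<Longrightarrow> (\<Sum>j<n. A $$ (i, j) * v $ j) = e * v $ i"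
    using A by (elim eigenvectorE) auto
  \<comment> \<open>Evaluate the eigenvalue equation at a coordinate of maximal modulus.\<close>
  obtain i where i: "i < n" and max: "\<And>j. j < n \<Longrightarrow> norm (v $ j) \<le> norm (v $ i)"
  proof -
    let ?m = "Max ((\<lambda>j. norm (v $ j)) ` {..<n})"
    have bound: "norm (v $ j) \<le> ?m" if "j < n" for j
      using that by simp
    have "?m \<in> (\<lambda>j. norm (v $ j)) ` {..<n}"
      using i1(1) by (intro Max_in) auto
    then obtain i where "i < n" "norm (v $ i) = ?m"
      by auto
    with bound show thesis
      by (intro that[of i]) auto
  qed
  have "0 < norm (v $ i)"
    using max[OF i1(1)] i1(2) by (smt (verit) zero_less_norm_iff)
  have "norm e * norm (v $ i) = norm (\<Sum>j<n. A $$ (i, j) * v $ j)"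
    using Av[OF i] by (simp add: norm_mult)
  also have "\<dots> \<le> (\<Sum>j<n. norm (A $$ (i, j)) * norm (v $ i))"
    using max by (intro sum_norm_le) (simp add: norm_mult mult_left_mono)
  also have "\<dots> \<le> d * norm (v $ i)"
    using rows[OF i] by (simp add: mult_right_mono flip: sum_distrib_right)
  finally show ?thesis
    using \<open>0 < norm (v $ i)\<close> by simp
qed

lemma eigenvalue_if_row_sums_const:
  fixes A :: "'a::comm_ring_1 mat"
  assumes A: "A \<in> carrier_mat n n" and "0 < n"
    and rows: "\<And>i. i < n \<Longrightarrow> (\<Sum>j<n. A $$ (i, j)) = d"
  shows "eigenvalue A d"
proof -
  have "eigenvector A (vec n (\<lambda>_. 1)) d"
    unfolding eigenvector_def
  proof (intro conjI)
    show "vec n (\<lambda>_. 1::'a) \<noteq> 0\<^sub>v (dim_row A)"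
    proof
      assume "vec n (\<lambda>_. 1::'a) = 0\<^sub>v (dim_row A)"
      then have "vec n (\<lambda>_. 1::'a) $ 0 = 0\<^sub>v (dim_row A) $ 0" by simp
      with A \<open>0 < n\<close> show False by simp
    qed
    show "A *\<^sub>v vec n (\<lambda>_. 1) = d \<cdot>\<^sub>v vec n (\<lambda>_. 1)"
      using A rows by (intro eq_vecI) (simp_all add: index_mult_mat_vec_sum del: index_mult_mat_vec)
  qed (use A in auto)
  then show ?thesis
    unfolding eigenvalue_def by blast
qed

section \<open>Adjacency matrices and walks of length two\<close>

lemma adjacency_matrix_carrier [simp]: "adjacency_matrix n E \<in> carrier_mat n n"
  and dim_adjacency_matrix [simp]: "dim_row (adjacency_matrix n E) = n" "dim_col (adjacency_matrix n E) = n"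
  by (simp_all add: adjacency_matrix_def)

lemmas index_adjacency_mult = index_mult_mat_sum[OF adjacency_matrix_carrier adjacency_matrix_carrier]

lemma index_adjacency_matrix [simp]:
  "i < n \<Longrightarrow> j < n \<Longrightarrow> adjacency_matrix n E $$ (i, j) = (if E i j then 1 else 0)"
  by (simp add: adjacency_matrix_def)

lemma adjacency_matrix_symmetric:
  "simple_graph n E \<Longrightarrow> i < n \<Longrightarrow> j < n \<Longrightarrow> adjacency_matrix n E $$ (j, i) = adjacency_matrix n E $$ (i, j)"
  by (simp add: simple_graph_def)

lemma adjacency_matrix_row_sum:
  "i < n \<Longrightarrow> (\<Sum>j<n. adjacency_matrix n E $$ (i, j)) = real (degree n E i)"
  by (simp add: degree_def sum.If_cases Int_def conj_commute)

lemma index_adjacency_square: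
  fixes n :: nat and E :: "nat \<Rightarrow> nat \<Rightarrow> bool"
  defines "A \<equiv> adjacency_matrix n E"
  assumes "i < n" "j < n"
  shows "(A * A) $$ (i, j) = real (card {l. l < n \<and> E i l \<and> E l j})"
proof -
  have "(A * A) $$ (i, j) = (\<Sum>l<n. if E i l \<and> E l j then 1 else 0)"
    using assms by (auto simp: index_adjacency_mult intro!: sum.cong)
  then show ?thesis
    by (simp add: sum.If_cases Int_def conj_commute)
qed

lemma adjacency_square_diag:
  fixes n :: nat and E :: "nat \<Rightarrow> nat \<Rightarrow> bool"
  defines "A \<equiv> adjacency_matrix n E"
  assumes "simple_graph n E" "i < n"
  shows "(A * A) $$ (i, i) = real (degree n E i)"
proof -
  have "{l. l < n \<and> E i l \<and> E l i} = {l. l < n \<and> E i l}"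
    using assms(2,3) by (auto simp: simple_graph_def)
  then show ?thesis
    using assms by (simp add: index_adjacency_square degree_def)
qed

lemma adjacency_square_symmetric:
  fixes n :: nat and E :: "nat \<Rightarrow> nat \<Rightarrow> bool"
  defines "A \<equiv> adjacency_matrix n E"
  assumes "simple_graph n E" "i < n" "j < n"
  shows "(A * A) $$ (j, i) = (A * A) $$ (i, j)"
proof -
  have "{l. l < n \<and> E j l \<and> E l i} = {l. l < n \<and> E i l \<and> E l j}"
    using assms(2-4) by (auto simp: simple_graph_def)
  then show ?thesis
    using assms by (simp add: index_adjacency_square)
qed

lemma regular_adjacency_square_row_sum:
  fixes n :: nat and E :: "nat \<Rightarrow> nat \<Rightarrow> bool"
  defines "A \<equiv> adjacency_matrix n E"
  assumes "regular_graph k n E" "i < n"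
  shows "(\<Sum>j<n. (A * A) $$ (i, j)) = real k ^ 2"
proof -
  have "(\<Sum>j<n. (A * A) $$ (i, j)) = (\<Sum>j<n. \<Sum>l<n. A $$ (i, l) * A $$ (l, j))"
    using assms(3) by (simp add: A_def index_adjacency_mult)
  also have "\<dots> = (\<Sum>l<n. A $$ (i, l) * (\<Sum>j<n. A $$ (l, j)))"
    by (subst sum.swap) (simp add: sum_distrib_left)
  also have "\<dots> = (\<Sum>l<n. A $$ (i, l) * real k)"
    using assms(2) by (simp add: A_def adjacency_matrix_row_sum regular_graph_def del: index_adjacency_matrix)
  also have "\<dots> = real k ^ 2"
    using assms by (simp add: A_def adjacency_matrix_row_sum regular_graph_def power2_eq_square
        flip: sum_distrib_right del: index_adjacency_matrix)
  finally show ?thesis .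
qed

lemma trace_regular_adjacency_square:
  assumes "regular_graph k n E"
  shows "trace (adjacency_matrix n E ^\<^sub>m 2) = real (k * n)"
proof -
  have "trace (adjacency_matrix n E ^\<^sub>m 2) = (\<Sum>i<n. (adjacency_matrix n E * adjacency_matrix n E) $$ (i, i))"
    by (simp add: trace_def numeral_2_eq_2)
  also have "\<dots> = (\<Sum>i<n. real k)"
    using assms by (simp add: adjacency_square_diag regular_graph_def)
  finally show ?thesis by simp
qed

lemma trace_regular_adjacency_fourth_ge:
  fixes n :: nat and E :: "nat \<Rightarrow> nat \<Rightarrow> bool"
  defines "A \<equiv> adjacency_matrix n E"
  assumes reg: "regular_graph k n E"
  shows "real n * (2 * real k ^ 2 - real k) \<le> trace (A ^\<^sub>m 4)"
proof -
  define M where "M = A * A"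
  have simple: "simple_graph n E"
    using reg by (simp add: regular_graph_def)
  have M: "M \<in> carrier_mat n n"
    unfolding M_def A_def by (rule mult_carrier_mat) auto
  have "A ^\<^sub>m 4 = A * A * A * A"
    by (simp add: A_def numeral_eq_Suc)
  also have "\<dots> = M * M"
    unfolding M_def A_def by (rule assoc_mult_mat[of _ n n]) auto
  finally have "trace (A ^\<^sub>m 4) = (\<Sum>i<n. \<Sum>j<n. M $$ (i, j) * M $$ (j, i))"
    using trace_mult_self[OF M] by simp
  also have "\<dots> = (\<Sum>i<n. \<Sum>j<n. M $$ (i, j) ^ 2)"
    using adjacency_square_symmetric[OF simple]
    by (intro sum.cong refl) (simp add: M_def A_def power2_eq_square)
  finally have trace_eq: "trace (A ^\<^sub>m 4) = (\<Sum>i<n. \<Sum>j<n. M $$ (i, j) ^ 2)" .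
  have row: "2 * real k ^ 2 - real k \<le> (\<Sum>j<n. M $$ (i, j) ^ 2)" if i: "i < n" for i
  proof -
    \<comment> \<open>Entries of M count walks of length 2, so they are natural numbers and at most their squares.\<close>
    have "M $$ (i, i) ^ 2 - M $$ (i, i) \<le> (\<Sum>j<n. M $$ (i, j) ^ 2 - M $$ (i, j))"
    proof (rule member_le_sum)
      show "0 \<le> M $$ (i, j) ^ 2 - M $$ (i, j)" if "j \<in> {..<n} - {i}" for j
        using that i le_square[of "card {l. l < n \<and> E i l \<and> E l j}"]
        by (simp add: M_def A_def index_adjacency_square power2_eq_square flip: of_nat_mult)
    qed (use i in auto)
    moreover have "M $$ (i, i) = real k" "(\<Sum>j<n. M $$ (i, j)) = real k ^ 2"
      using reg i adjacency_square_diag[OF simple i] regular_adjacency_square_row_sum[OF reg i]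
      by (simp_all add: M_def A_def regular_graph_def)
    ultimately show ?thesis
      by (simp add: sum_subtractf)
  qed
  have "(\<Sum>i<n. 2 * real k ^ 2 - real k) \<le> trace (A ^\<^sub>m 4)"
    unfolding trace_eq by (rule sum_mono) (simp add: row)
  then show ?thesis
    by simp
qed

section \<open>The real spectrum of a simple graph\<close>

definition real_spectrum :: "nat \<Rightarrow> (nat \<Rightarrow> nat \<Rightarrow> bool) \<Rightarrow> real multiset" where
  "real_spectrum n E = image_mset Re (graph_eigenvalues n E)"

lemma mem_graph_eigenvalues_iff:
  "a \<in># graph_eigenvalues n E \<longleftrightarrow> eigenvalue (map_mat complex_of_real (adjacency_matrix n E)) a"
  unfolding graph_eigenvalues_def by (rule mem_proots_char_poly_iff[of _ n]) simp

lemma size_real_spectrum [simp]: "size (real_spectrum n E) = n"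
  by (simp add: real_spectrum_def graph_eigenvalues_def size_proots_char_poly)

lemma graph_eigenvalues_eq_real_spectrum:
  assumes "simple_graph n E"
  shows "graph_eigenvalues n E = image_mset of_real (real_spectrum n E)"
proof -
  have "of_real (Re a) = a" if "a \<in># graph_eigenvalues n E" for a
    using that assms adjacency_matrix_symmetric[OF assms]
    by (intro of_real_Re eigenvalue_of_real_symmetric_is_real[of _ n])
      (auto simp: mem_graph_eigenvalues_iff)
  then show ?thesis
    unfolding real_spectrum_def multiset.map_comp by (simp add: multiset.map_ident_strong)
qed

lemma graph_energy_eq_real_spectrum:
  "simple_graph n E \<Longrightarrow> graph_energy n E = (\<Sum>x\<in>#real_spectrum n E. \<bar>x\<bar>)"
  by (simp add: graph_energy_def graph_eigenvalues_eq_real_spectrum multiset.map_comp o_def)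

lemma sum_real_spectrum_power:
  assumes "simple_graph n E"
  shows "(\<Sum>x\<in>#real_spectrum n E. x ^ k) = trace (adjacency_matrix n E ^\<^sub>m k)"
proof -
  have "complex_of_real (\<Sum>x\<in>#M. x ^ k) = (\<Sum>x\<in>#M. of_real x ^ k)" for M
    by (induction M) auto
  then have "complex_of_real (\<Sum>x\<in>#real_spectrum n E. x ^ k) = (\<Sum>a\<in>#graph_eigenvalues n E. a ^ k)"
    by (simp add: graph_eigenvalues_eq_real_spectrum[OF assms] multiset.map_comp o_def)
  also have "\<dots> = trace (map_mat complex_of_real (adjacency_matrix n E) ^\<^sub>m k)"
    unfolding graph_eigenvalues_def by (rule sum_proots_char_poly_power[of _ n]) simp
  also have "map_mat complex_of_real (adjacency_matrix n E) ^\<^sub>m k = map_mat of_real (adjacency_matrix n E ^\<^sub>m k)"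
    by (rule of_real_hom.mat_hom_pow[symmetric, of _ n]) simp
  also have "trace \<dots> = complex_of_real (trace (adjacency_matrix n E ^\<^sub>m k))"
    by (rule trace_map_mat_of_real[of _ n]) simp
  finally show ?thesis
    by (simp only: of_real_eq_iff)
qed

lemma real_spectrum_abs_le_degree:
  assumes "regular_graph k n E" "x \<in># real_spectrum n E"
  shows "\<bar>x\<bar> \<le> real k"
proof -
  obtain a where a: "a \<in># graph_eigenvalues n E" and x: "x = Re a"
    using assms(2) by (auto simp: real_spectrum_def)
  have "cmod a \<le> real k"
  proof (rule eigenvalue_norm_le_row_sum[of _ n])
    show "eigenvalue (map_mat complex_of_real (adjacency_matrix n E)) a"
      using a by (simp add: mem_graph_eigenvalues_iff)
    show "(\<Sum>j<n. cmod (map_mat complex_of_real (adjacency_matrix n E) $$ (i, j))) \<le> real k" if "i < n" for i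
      using that assms(1) adjacency_matrix_row_sum[OF that, of E]
      by (simp add: regular_graph_def if_distrib[of abs])
  qed simp
  with abs_Re_le_cmod[of a] show ?thesis
    unfolding x by (rule order.trans)
qed

lemma degree_mem_real_spectrum:
  assumes "regular_graph k n E" "0 < n"
  shows "real k \<in># real_spectrum n E"
proof -
  have "eigenvalue (map_mat complex_of_real (adjacency_matrix n E)) (of_nat k)"
  proof (rule eigenvalue_if_row_sums_const[OF _ assms(2)])
    show "(\<Sum>j<n. map_mat complex_of_real (adjacency_matrix n E) $$ (i, j)) = of_nat k" if "i < n" for i
      using that assms(1) adjacency_matrix_row_sum[OF that, of E]
      by (simp add: regular_graph_def of_real_sum[symmetric] del: index_adjacency_matrix)
  qed simp
  then have "of_nat k \<in># graph_eigenvalues n E"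
    by (simp add: mem_graph_eigenvalues_iff)
  then have "Re (of_nat k) \<in># real_spectrum n E"
    unfolding real_spectrum_def in_image_mset by (rule imageI)
  then show ?thesis
    by simp
qed

section \<open>Bounding a sum of absolute values by two moments\<close>

text \<open>The right-hand side is (s^2 + x^2) / (2 s) - e (x^2 - s^2)^2 expanded into powers of x:
  the slack (|x| - s)^2 / (2 s) in the AM-GM bound |x| \<le> (s^2 + x^2) / (2 s) absorbs the quartic term.\<close>

lemma abs_le_quartic_majorant:
  fixes x s e b :: real
  assumes "0 < s" "0 \<le> e" "\<bar>x\<bar> \<le> b" "2 * s * e * (b + s)\<^sup>2 \<le> 1"
  shows "\<bar>x\<bar> \<le> s / 2 - e * s ^ 4 + (1 / (2 * s) + 2 * e * s\<^sup>2) * x\<^sup>2 - e * x ^ 4"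
proof -
  define t where "t = \<bar>x\<bar>"
  have t: "0 \<le> t" "t \<le> b" and x: "x\<^sup>2 = t\<^sup>2" "x ^ 4 = t ^ 4"
    using assms(3) by (simp_all add: t_def power_even_abs)
  have "e * (t + s)\<^sup>2 \<le> e * (b + s)\<^sup>2"
    using assms(1,2) t by (intro mult_left_mono power_mono) auto
  then have "2 * s * (e * (t + s)\<^sup>2) \<le> 2 * s * (e * (b + s)\<^sup>2)"
    by (rule mult_left_mono) (use assms(1) in simp)
  also have "\<dots> \<le> 1"
    using assms(4) by (simp add: mult.assoc)
  finally have "2 * s * (e * (t + s)\<^sup>2) \<le> 1" .
  then have "(t - s)\<^sup>2 * (2 * s * (e * (t + s)\<^sup>2)) \<le> (t - s)\<^sup>2 * 1"
    by (rule mult_left_mono) simp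
  moreover have "(t - s)\<^sup>2 * (2 * s * (e * (t + s)\<^sup>2)) = 2 * s * e * (t\<^sup>2 - s\<^sup>2)\<^sup>2"
    by (simp add: power2_eq_square algebra_simps)
  ultimately have "0 \<le> ((t - s)\<^sup>2 - 2 * s * e * (t\<^sup>2 - s\<^sup>2)\<^sup>2) / (2 * s)"
    using assms(1) by simp
  also have "\<dots> = s / 2 - e * s ^ 4 + (1 / (2 * s) + 2 * e * s\<^sup>2) * t\<^sup>2 - e * t ^ 4 - t"
    using assms(1) by (simp add: field_simps) (simp add: power2_eq_square power4_eq_xxxx algebra_simps)
  finally show ?thesis
    unfolding x t_def by simp
qed

lemma sum_abs_le_moments:
  fixes M :: "real multiset"
  assumes "0 < s" "0 \<le> e" "\<forall>x\<in>#M. \<bar>x\<bar> \<le> b" "2 * s * e * (b + s)\<^sup>2 \<le> 1"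
    and "(\<Sum>x\<in>#M. x\<^sup>2) = S2" "S4 \<le> (\<Sum>x\<in>#M. x ^ 4)"
  shows "(\<Sum>x\<in>#M. \<bar>x\<bar>) \<le> (s / 2 - e * s ^ 4) * size M + (1 / (2 * s) + 2 * e * s\<^sup>2) * S2 - e * S4"
proof -
  have "(\<Sum>x\<in>#M. \<bar>x\<bar>) \<le> (s / 2 - e * s ^ 4) * size M
      + (1 / (2 * s) + 2 * e * s\<^sup>2) * (\<Sum>x\<in>#M. x\<^sup>2) - e * (\<Sum>x\<in>#M. x ^ 4)"
    using assms(3)
  proof (induction M)
    case (add x M)
    then show ?case
      using abs_le_quartic_majorant[OF assms(1,2) _ assms(4), of x] by (simp add: algebra_simps add_divide_distrib)
  qed simp
  moreover have "e * S4 \<le> e * (\<Sum>x\<in>#M. x ^ 4)"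
    using assms(2,6) by (rule mult_left_mono[rotated])
  ultimately show ?thesis
    using assms(5) by simp
qed

lemma quartic_le_if_endpoints_le:
  fixes c e p q t B :: real
  assumes "0 \<le> p" "p \<le> t" "t \<le> q" "0 \<le> e" "c \<le> 6 * e * p\<^sup>2"
    and "p - c * p\<^sup>2 + e * p ^ 4 \<le> B" "q - c * q\<^sup>2 + e * q ^ 4 \<le> B"
  shows "t - c * t\<^sup>2 + e * t ^ 4 \<le> B"
proof -
  define g where "g x = x - c * x\<^sup>2 + e * x ^ 4" for x
  \<comment> \<open>g is convex on [p, q], so it lies below its chord.\<close>
  define h where "h = e * (t\<^sup>2 + (p + q) * t + p\<^sup>2 + p * q + q\<^sup>2) - c"
  have "6 * p\<^sup>2 \<le> t\<^sup>2 + (p + q) * t + p\<^sup>2 + p * q + q\<^sup>2"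
    using mult_mono[of p t p t] mult_mono[of p p p t] mult_mono[of p q p t] mult_mono[of p p p q]
      mult_mono[of p q p q] assms(1-3)
    unfolding power2_eq_square distrib_right by linarith
  from mult_left_mono[OF this assms(4)] have "0 \<le> h"
    using assms(5) unfolding h_def by (simp add: algebra_simps)
  then have "0 \<le> (q - p) * (t - p) * (q - t) * h"
    using assms(2,3) by simp
  also have "\<dots> = (q - t) * g p + (t - p) * g q - (q - p) * g t"
    by (simp add: g_def h_def power2_eq_square power4_eq_xxxx algebra_simps)
  also have "\<dots> \<le> (q - t) * B + (t - p) * B - (q - p) * g t"
    using assms(2,3,6,7) by (simp add: g_def add_mono mult_left_mono)
  finally have "(q - p) * g t \<le> (q - p) * B"
    by (simp add: algebra_simps)
  then show ?thesis
    using assms(2,3,6) by (cases "p = q") (auto simp: g_def)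
qed

lemma sum_abs_lt_if_moments:
  fixes M :: "real multiset"
  assumes size: "20 \<le> size M" and four: "4 \<in># M" and bound: "\<forall>x\<in>#M. \<bar>x\<bar> \<le> 4"
    and m2: "(\<Sum>x\<in>#M. x\<^sup>2) = 4 * size M" and m4: "28 * size M \<le> (\<Sum>x\<in>#M. x ^ 4)"
  shows "(\<Sum>x\<in>#M. \<bar>x\<bar>) < 2 * (real (size M) - 1)"
proof -
  obtain N where M: "M = add_mset 4 N"
    using multi_member_split[OF four] by blast
  have N: "\<forall>x\<in>#N. \<bar>x\<bar> \<le> 4" "(\<Sum>x\<in>#N. x\<^sup>2) = 4 * real (size N) - 12" "28 * real (size N) - 228 \<le> (\<Sum>x\<in>#N. x ^ 4)"
    using bound m2 m4 by (simp_all add: M)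
  have size_N: "19 \<le> real (size N)"
    using size by (simp add: M)
  \<comment> \<open>An eigenvalue of modulus above 3, if any, is split off and bounded by convexity;
    the others only need a majorant valid on [-4, 4].  The parameters s = 17/10 and e = 1/80,
    1/111, 1/140 of the majorants were chosen numerically; every case has some slack.\<close>
  consider "\<forall>x\<in>#N. \<bar>x\<bar> \<le> 3" | y L where "N = add_mset y L" "3 < \<bar>y\<bar>" "\<bar>y\<bar> \<le> 7/2"
    | y L where "N = add_mset y L" "7/2 < \<bar>y\<bar>" "\<bar>y\<bar> \<le> 4"
    using N(1) by (metis multi_member_split not_le)
  then show ?thesis
  proof cases
    case 1
    with sum_abs_le_moments[of "17/10" "1/80" N 3, OF _ _ _ _ N(2,3)] show ?thesis
      by (simp add: M power_divide field_simps) (use size_N in linarith)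
  next
    case (2 y L)
    have L: "\<forall>x\<in>#L. \<bar>x\<bar> \<le> 4" "real (size N) = real (size L) + 1"
      "(\<Sum>x\<in>#L. x\<^sup>2) = 4 * real (size N) - 12 - y\<^sup>2" "28 * real (size N) - 228 - y ^ 4 \<le> (\<Sum>x\<in>#L. x ^ 4)"
      using N by (simp_all add: 2(1))
    have "\<bar>y\<bar> - (5/17 + 2/111 * (17/10)\<^sup>2) * \<bar>y\<bar>\<^sup>2 + 1/111 * \<bar>y\<bar> ^ 4 \<le> 5/8"
      by (rule quartic_le_if_endpoints_le[of 3 _ "7/2"]) (use 2 in \<open>simp_all add: power_divide\<close>)
    with sum_abs_le_moments[of "17/10" "1/111" L 4, OF _ _ L(1) _ L(3,4)] show ?thesis
      by (simp add: M 2(1) power_divide field_simps) (use L(2) size_N in linarith)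
  next
    case (3 y L)
    have L: "\<forall>x\<in>#L. \<bar>x\<bar> \<le> 4" "real (size N) = real (size L) + 1"
      "(\<Sum>x\<in>#L. x\<^sup>2) = 4 * real (size N) - 12 - y\<^sup>2" "28 * real (size N) - 228 - y ^ 4 \<le> (\<Sum>x\<in>#L. x ^ 4)"
      using N by (simp_all add: 3(1))
    have "\<bar>y\<bar> - (5/17 + 2/140 * (17/10)\<^sup>2) * \<bar>y\<bar>\<^sup>2 + 1/140 * \<bar>y\<bar> ^ 4 \<le> 19/40"
      by (rule quartic_le_if_endpoints_le[of "7/2" _ 4]) (use 3 in \<open>simp_all add: power_divide\<close>)
    with sum_abs_le_moments[of "17/10" "1/140" L 4, OF _ _ L(1) _ L(3,4)] show ?thesis
      by (simp add: M 3(1) power_divide field_simps) (use L(2) size_N in linarith)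
  qed
qed

lemma graph_energy_lt_if_4_regular:
  assumes reg: "regular_graph 4 n E" and "20 \<le> n"
  shows "graph_energy n E < 2 * (real n - 1)"
proof -
  have simple: "simple_graph n E"
    using reg by (simp add: regular_graph_def)
  let ?S = "real_spectrum n E"
  have "(\<Sum>x\<in>#?S. \<bar>x\<bar>) < 2 * (real (size ?S) - 1)"
  proof (rule sum_abs_lt_if_moments)
    show "20 \<le> size ?S" "4 \<in># ?S"
      using degree_mem_real_spectrum[OF reg] \<open>20 \<le> n\<close> by auto
    show "\<forall>x\<in>#?S. \<bar>x\<bar> \<le> 4"
      using real_spectrum_abs_le_degree[OF reg] by auto
    show "(\<Sum>x\<in>#?S. x\<^sup>2) = 4 * size ?S" "28 * size ?S \<le> (\<Sum>x\<in>#?S. x ^ 4)"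
      using trace_regular_adjacency_square[OF reg] trace_regular_adjacency_fourth_ge[OF reg]
      by (simp_all add: sum_real_spectrum_power[OF simple])
  qed
  then show ?thesis
    by (simp add: graph_energy_eq_real_spectrum[OF simple])
qed

theorem theorem3p1:
  fixes n :: nat and E :: "nat \<Rightarrow> nat \<Rightarrow> bool"
  assumes "n = 20 \<or> n = 21"
    and "regular_graph 4 n E"
  shows "graph_energy n E < 2 * (real n - 1)"
  using assms by (intro graph_energy_lt_if_4_regular) auto

end
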